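(* Let $G=(V,E,s)$ be a flow graph with dominator tree $D$, let $(x,y)\in E$ with $x$ reachable from $s$, and let $G'$ be obtained from $G$ by deleting $(x,y)$, where $y$ is still reachable from $s$ in $G'$. If a vertex $v$ (reachable in both $G$ and $G'$) is affected by the deletion, i.e., $d'(v)\neq d(v)$, then $d(v)=d(y)$ and there is a path $P$ in $G$ from $y$ to $v$ such that $\mathit{depth}(d(v))<\mathit{depth}(w)$ for all vertices $w$ on $P$.
   Context: A flow graph $G=(V,E,s)$ is a directed graph with start vertex $s$; a vertex is reachable if there is a path from $s$ to it. For reachable vertices, $w$ dominates $v$ if every path from $s$ to $v$ contains $w$. The immediate dominator $d(v)$ of a reachable $v\neq s$ is the proper dominator of $v$ that is dominated by all other proper dominators of $v$. The dominator tree $D$ is the tree on the reachable vertices rooted at $s$ in which the parent of $v\neq s$ is $d(v)$; $\mathit{depth}(w)$ is the depth of $w$ in $D$ (the dominator tree of $G$, before the deletion). $d'(v)$ denotes the immediate dominator of $v$ in $G'$. *)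

theory Defs
  imports Main
begin

definition is_path :: "('v \<times> 'v) set \<Rightarrow> 'v list \<Rightarrow> bool" where
  "is_path E p \<longleftrightarrow> p \<noteq> [] \<and> (\<forall>i. Suc i < length p \<longrightarrow> (p ! i, p ! Suc i) \<in> E)"

definition flow_graph :: "'v set \<Rightarrow> ('v \<times> 'v) set \<Rightarrow> 'v \<Rightarrow> bool" where
  "flow_graph V E s \<longleftrightarrow> finite V \<and> E \<subseteq> V \<times> V \<and> s \<in> V"

definition reachable :: "('v \<times> 'v) set \<Rightarrow> 'v \<Rightarrow> 'v \<Rightarrow> bool" where
  "reachable E s v \<longleftrightarrow> (\<exists>p. is_path E p \<and> hd p = s \<and> last p = v)"

definition dominates :: "('v \<times> 'v) set \<Rightarrow> 'v \<Rightarrow> 'v \<Rightarrow> 'v \<Rightarrow> bool" where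
  "dominates E s w v \<longleftrightarrow> reachable E s w \<and> reachable E s v \<and>
     (\<forall>p. is_path E p \<and> hd p = s \<and> last p = v \<longrightarrow> w \<in> set p)"

definition idom :: "('v \<times> 'v) set \<Rightarrow> 'v \<Rightarrow> 'v \<Rightarrow> 'v" where
  "idom E s v = (THE w. w \<noteq> v \<and> dominates E s w v \<and>
      (\<forall>u. u \<noteq> v \<and> dominates E s u v \<longrightarrow> dominates E s u w))"

text \<open>Depth in the dominator tree (root s, parent of v is idom v): the number of
  parent steps needed to reach the root.\<close>
definition dt_depth :: "('v \<times> 'v) set \<Rightarrow> 'v \<Rightarrow> 'v \<Rightarrow> nat" where
  "dt_depth E s w = (LEAST k. (idom E s ^^ k) w = s)"

end

theory Submission
  imports Defs
begin

text \<open>For \<open>w \<noteq> s\<close>, \<open>w\<close> dominates \<open>v\<close> iff \<open>v\<close> is unreachable from \<open>s\<close> once \<open>w\<close> is removed,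
  so dominance arguments become statements about the reflexive transitive closures of
  restricted edge relations. Let \<open>d = d(v)\<close> and \<open>u = d'(v) \<noteq> d\<close>. Since \<open>d\<close> still dominates \<open>v\<close>
  in \<open>G'\<close>, it dominates \<open>u\<close> there; so \<open>u\<close> does not dominate \<open>v\<close> in \<open>G\<close>, and a walk from \<open>s\<close>
  to \<open>v\<close> in \<open>G\<close> avoiding \<open>u\<close> must use the edge \<open>(x, y)\<close>. Its part after the last use of
  that edge is a walk from \<open>y\<close> to \<open>v\<close> in \<open>G'\<close> avoiding \<open>u\<close>, and it also avoids \<open>d\<close>, because
  otherwise \<open>d\<close> would reach \<open>v\<close> in \<open>G'\<close> avoiding \<open>u\<close>. Hence \<open>d\<close> strictly dominates every
  vertex of this walk, which gives the depth bound. Finally \<open>d(y)\<close> dominates \<open>u\<close> in \<open>G'\<close>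
  (both dominate \<open>y\<close> there, and \<open>d(y)\<close> is reachable in \<open>G'\<close> avoiding \<open>u\<close>), hence \<open>d(y)\<close>
  dominates \<open>v\<close> in \<open>G\<close>, which forces \<open>d(y) = d\<close>.\<close>

section \<open>Walks\<close>

lemma is_path_Cons_Cons [simp]:
  "is_path E (a # b # p) \<longleftrightarrow> (a, b) \<in> E \<and> is_path E (b # p)"
  by (auto simp: is_path_def nth_Cons split: nat.split)

lemma is_path_mono: "is_path E p \<Longrightarrow> E \<subseteq> E' \<Longrightarrow> is_path E' p"
  unfolding is_path_def by blast

lemma is_path_imp_rtrancl_Restr:
  "is_path E p \<Longrightarrow> set p \<subseteq> S \<Longrightarrow> (hd p, last p) \<in> (Restr E S)\<^sup>*"
proof (induction p rule: induct_list012)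
  case (3 a b p)
  then have "(a, b) \<in> Restr E S" "(b, last (b # p)) \<in> (Restr E S)\<^sup>*" by auto
  then have "(a, last (b # p)) \<in> (Restr E S)\<^sup>*" by (rule converse_rtrancl_into_rtrancl)
  then show ?case by simp
qed (auto simp: is_path_def)

lemma rtrancl_imp_is_path:
  assumes "(a, b) \<in> R\<^sup>*"
  obtains p where "is_path R p" "hd p = a" "last p = b"
    "\<forall>w\<in>set p. (a, w) \<in> R\<^sup>* \<and> (w, b) \<in> R\<^sup>*"
  using assms
proof (induction arbitrary: thesis rule: converse_rtrancl_induct)
  case base
  show ?case by (rule base[of "[b]"]) (auto simp: is_path_def)
next
  case (step a a')
  obtain p where p: "is_path R p" "hd p = a'" "last p = b"
    "\<forall>w\<in>set p. (a', w) \<in> R\<^sup>* \<and> (w, b) \<in> R\<^sup>*"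
    using step.IH by blast
  then obtain p' where "p = a' # p'" by (cases p) (auto simp: is_path_def)
  with p step.hyps show ?case
    by (intro step.prems[of "a # p"]) (auto intro: converse_rtrancl_into_rtrancl)
qed

lemma rtrancl_Restr_mem: "(a, b) \<in> (Restr R S)\<^sup>* \<Longrightarrow> a \<in> S \<Longrightarrow> b \<in> S"
  by (induction rule: rtrancl_induct) auto

lemma rtrancl_Restr_source: "(a, b) \<in> (Restr R S)\<^sup>* \<Longrightarrow> a = b \<or> a \<in> S"
  by (auto elim: converse_rtranclE)

lemma rtrancl_Restr_mono:
  "(a, b) \<in> (Restr R S)\<^sup>* \<Longrightarrow> R \<subseteq> R' \<Longrightarrow> S \<subseteq> T \<Longrightarrow> (a, b) \<in> (Restr R' T)\<^sup>*"
  using rtrancl_mono[of "Restr R S" "Restr R' T"] by blast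

lemma rtrancl_Restr_exit:
  assumes "(a, b) \<in> R\<^sup>*" "a \<in> S"
  shows "(a, b) \<in> (Restr R S)\<^sup>* \<or>
    (\<exists>c e. (a, c) \<in> (Restr R S)\<^sup>* \<and> c \<in> S \<and> (c, e) \<in> R \<and> e \<notin> S \<and> (e, b) \<in> R\<^sup>*)"
  using assms
proof (induction rule: converse_rtrancl_induct)
  case (step a a')
  show ?case
  proof (cases "a' \<in> S")
    case True
    with step have "(a, a') \<in> Restr R S" by blast
    with step.IH[OF True] show ?thesis by (meson converse_rtrancl_into_rtrancl)
  next
    case False
    with step show ?thesis by blast
  qed
qed simp

lemma rtrancl_Restr_entry:
  assumes "(a, b) \<in> R\<^sup>*" "b \<in> S"
  shows "(a, b) \<in> (Restr R S)\<^sup>* \<or>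
    (\<exists>c e. (a, c) \<in> R\<^sup>* \<and> c \<notin> S \<and> (c, e) \<in> R \<and> e \<in> S \<and> (e, b) \<in> (Restr R S)\<^sup>*)"
  using assms
proof (induction rule: rtrancl_induct)
  case (step b' b)
  show ?case
  proof (cases "b' \<in> S")
    case True
    with step have "(b', b) \<in> Restr R S" by blast
    with step.IH[OF True] show ?thesis by (meson rtrancl_into_rtrancl)
  next
    case False
    with step show ?thesis by blast
  qed
qed simp

lemma rtrancl_Diff_edge:
  assumes "(a, b) \<in> R\<^sup>*"
  shows "(a, b) \<in> (R - {(x, y)})\<^sup>* \<or>
    (a, x) \<in> R\<^sup>* \<and> (x, y) \<in> R \<and> (y, b) \<in> (R - {(x, y)})\<^sup>*"
  using assms
proof (induction rule: converse_rtrancl_induct)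
  case (step a a')
  show ?case
  proof (cases "(a, a') = (x, y)")
    case True
    with step show ?thesis by auto
  next
    case False
    with step show ?thesis by (meson Diff_iff converse_rtrancl_into_rtrancl singletonD)
  qed
qed simp

lemma reachable_iff_rtrancl: "reachable E s v \<longleftrightarrow> (s, v) \<in> E\<^sup>*"
proof
  assume "reachable E s v"
  then obtain p where "is_path E p" "hd p = s" "last p = v"
    unfolding reachable_def by blast
  then show "(s, v) \<in> E\<^sup>*" using is_path_imp_rtrancl_Restr[of E p UNIV] by simp
next
  assume "(s, v) \<in> E\<^sup>*"
  then obtain p where "is_path E p" "hd p = s" "last p = v"
    by (rule rtrancl_imp_is_path)
  then show "reachable E s v"
    unfolding reachable_def by blast
qed

section \<open>Dominance\<close>

lemma dominates_iff:
  "dominates E s w v \<longleftrightarrow> (s, w) \<in> E\<^sup>* \<and> (s, v) \<in> E\<^sup>* \<and>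
     (w \<noteq> s \<longrightarrow> (s, v) \<notin> (Restr E (- {w}))\<^sup>*)"
proof -
  have "(\<exists>p. is_path E p \<and> hd p = s \<and> last p = v \<and> w \<notin> set p) \<longleftrightarrow>
        w \<noteq> s \<and> (s, v) \<in> (Restr E (- {w}))\<^sup>*" (is "?path \<longleftrightarrow> ?walk")
  proof
    assume ?path
    then obtain p where p: "is_path E p" "hd p = s" "last p = v" "w \<notin> set p" by blast
    then have "w \<noteq> s" by (metis hd_in_set is_path_def)
    with p show ?walk using is_path_imp_rtrancl_Restr[of E p "- {w}"] by blast
  next
    assume walk: ?walk
    then have "(s, v) \<in> (Restr E (- {w}))\<^sup>*" ..
    then obtain p where p: "is_path (Restr E (- {w})) p" "hd p = s" "last p = v"
      "\<forall>t\<in>set p. (s, t) \<in> (Restr E (- {w}))\<^sup>* \<and> (t, v) \<in> (Restr E (- {w}))\<^sup>*"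
      by (rule rtrancl_imp_is_path)
    have "w \<notin> set p"
    proof
      assume "w \<in> set p"
      with p(4) have "(s, w) \<in> (Restr E (- {w}))\<^sup>*" by blast
      with walk show False using rtrancl_Restr_mem by fastforce
    qed
    with p show ?path using is_path_mono[OF p(1) Int_lower1] by blast
  qed
  then show ?thesis unfolding dominates_def reachable_iff_rtrancl by blast
qed

lemma dominates_refl: "(s, v) \<in> E\<^sup>* \<Longrightarrow> dominates E s v v"
  by (auto simp: dominates_iff dest: rtrancl_Restr_mem)

lemma dominates_start: "(s, v) \<in> E\<^sup>* \<Longrightarrow> dominates E s s v"
  by (simp add: dominates_iff)

lemma dominates_startD: "dominates E s w s \<Longrightarrow> w = s"
  by (auto simp: dominates_iff)

lemma dominates_imp_rtrancl: "dominates E s w v \<Longrightarrow> (s, w) \<in> E\<^sup>* \<and> (s, v) \<in> E\<^sup>*"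
  by (simp add: dominates_iff)

lemma dominator_on_walk:
  assumes "dominates E s w v" "Q \<subseteq> E" "(s, v) \<in> Q\<^sup>*"
  shows "(s, w) \<in> Q\<^sup>*"
proof (cases "w = s")
  case False
  have "(s, v) \<notin> (Restr Q (- {w}))\<^sup>*"
  proof
    assume "(s, v) \<in> (Restr Q (- {w}))\<^sup>*"
    moreover have "Restr Q (- {w}) \<subseteq> Restr E (- {w})" using assms(2) by blast
    ultimately have "(s, v) \<in> (Restr E (- {w}))\<^sup>*" using rtrancl_mono by blast
    with assms(1) False show False by (simp add: dominates_iff)
  qed
  then obtain c where c: "(s, c) \<in> (Restr Q (- {w}))\<^sup>*" "(c, w) \<in> Q"
    using rtrancl_Restr_exit[OF assms(3), of "- {w}"] False by auto
  have "(s, c) \<in> Q\<^sup>*" using rtrancl_mono[of "Restr Q (- {w})" Q] c(1) by blast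
  then show ?thesis using c(2) by (rule rtrancl_into_rtrancl)
qed simp

lemma dominates_trans:
  assumes "dominates E s a b" "dominates E s b c"
  shows "dominates E s a c"
proof -
  have "(s, c) \<notin> (Restr E (- {a}))\<^sup>*" if "a \<noteq> s"
  proof
    assume "(s, c) \<in> (Restr E (- {a}))\<^sup>*"
    then have "(s, b) \<in> (Restr E (- {a}))\<^sup>*"
      using dominator_on_walk[OF assms(2)] by blast
    with assms(1) that show False by (simp add: dominates_iff)
  qed
  then show ?thesis using assms by (simp add: dominates_iff)
qed

lemma dominates_subgraph:
  assumes "E' \<subseteq> E" "dominates E s w v" "(s, v) \<in> E'\<^sup>*"
  shows "dominates E' s w v"
proof -
  have "(s, w) \<in> E'\<^sup>*" using dominator_on_walk[OF assms(2,1,3)] .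
  moreover have "(Restr E' (- {w}))\<^sup>* \<subseteq> (Restr E (- {w}))\<^sup>*"
    using assms(1) by (intro rtrancl_mono) blast
  ultimately show ?thesis using assms(2,3) unfolding dominates_iff by blast
qed

lemma dominates_backward:
  assumes "dominates E s w v" "(s, t) \<in> E\<^sup>*" "(t, v) \<in> (Restr E (- {w}))\<^sup>*"
  shows "dominates E s w t"
proof -
  have "(s, t) \<notin> (Restr E (- {w}))\<^sup>*" if "w \<noteq> s"
    using assms(1,3) that rtrancl_trans[of s t "Restr E (- {w})" v] by (auto simp: dominates_iff)
  then show ?thesis using assms(1,2) by (simp add: dominates_iff)
qed

lemma strictly_dominates_backward:
  assumes "dominates E s w v" "w \<noteq> v" "(s, t) \<in> E\<^sup>*" "(t, v) \<in> (Restr E (- {w}))\<^sup>*"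
  shows "dominates E s w t" "w \<noteq> t"
  using dominates_backward[OF assms(1,3,4)] rtrancl_Restr_source[OF assms(4)] assms(2) by auto

lemma dominates_predecessor:
  assumes "dominates E s w b" "w \<noteq> b" "(c, b) \<in> E" "(s, c) \<in> E\<^sup>*"
  shows "dominates E s w c"
proof (cases "c = w")
  case True
  then show ?thesis using assms(4) by (simp add: dominates_refl)
next
  case False
  with assms(2,3) have "(c, b) \<in> (Restr E (- {w}))\<^sup>*" by blast
  with assms(1,4) show ?thesis by (rule dominates_backward)
qed

lemma dominates_antisym:
  assumes ab: "dominates E s a b" and ba: "dominates E s b a"
  shows "a = b"
proof (rule ccontr)
  assume "a \<noteq> b"
  have "a \<noteq> s" using ba dominates_startD[of E s b] \<open>a \<noteq> b\<close> by auto
  have "b \<noteq> s" using ab dominates_startD[of E s a] \<open>a \<noteq> b\<close> by auto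
  have "(s, b) \<in> E\<^sup>*" using ab by (simp add: dominates_iff)
  moreover have "(s, b) \<notin> (Restr E (- {a, b}))\<^sup>*"
    using rtrancl_Restr_mem[of s b E "- {a, b}"] \<open>a \<noteq> s\<close> \<open>b \<noteq> s\<close> by blast
  ultimately obtain c e where c: "(s, c) \<in> (Restr E (- {a, b}))\<^sup>*" "c \<in> - {a, b}"
      and e: "(c, e) \<in> E" "e \<in> {a, b}"
    using rtrancl_Restr_exit[of s b E "- {a, b}"] \<open>a \<noteq> s\<close> \<open>b \<noteq> s\<close>
    by auto
  show False
  proof (cases "e = a")
    case True
    have "(s, c) \<in> (Restr E (- {b}))\<^sup>*" using c(1) by (rule rtrancl_Restr_mono) blast+
    moreover have "(c, a) \<in> Restr E (- {b})" using c(2) e True \<open>a \<noteq> b\<close> by blast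
    ultimately have "(s, a) \<in> (Restr E (- {b}))\<^sup>*" by (rule rtrancl_into_rtrancl)
    with ba \<open>b \<noteq> s\<close> show False by (simp add: dominates_iff)
  next
    case False
    have "(s, c) \<in> (Restr E (- {a}))\<^sup>*" using c(1) by (rule rtrancl_Restr_mono) blast+
    moreover have "(c, b) \<in> Restr E (- {a})" using c(2) e False \<open>a \<noteq> b\<close> by blast
    ultimately have "(s, b) \<in> (Restr E (- {a}))\<^sup>*" by (rule rtrancl_into_rtrancl)
    with ab \<open>a \<noteq> s\<close> show False by (simp add: dominates_iff)
  qed
qed

lemma dominates_linear:
  assumes av: "dominates E s a v" and bv: "dominates E s b v"
  shows "dominates E s a b \<or> dominates E s b a"
proof (rule ccontr)
  assume neither: "\<not> (dominates E s a b \<or> dominates E s b a)"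
  have sa: "(s, a) \<in> E\<^sup>*" and sb: "(s, b) \<in> E\<^sup>*" and sv: "(s, v) \<in> E\<^sup>*"
    using av bv by (simp_all add: dominates_iff)
  have "a \<noteq> s" using neither dominates_start[OF sb] by auto
  have "b \<noteq> s" using neither dominates_start[OF sa] by auto
  have "a \<noteq> v" "b \<noteq> v" using neither av bv by auto
  have "a \<noteq> b" using neither dominates_refl[OF sa] by auto
  have a_avoid_b: "(s, a) \<in> (Restr E (- {b}))\<^sup>*"
    using neither sa sb \<open>b \<noteq> s\<close> by (simp add: dominates_iff)
  have b_avoid_a: "(s, b) \<in> (Restr E (- {a}))\<^sup>*"
    using neither sa sb \<open>a \<noteq> s\<close> by (simp add: dominates_iff)
  have "(s, v) \<notin> (Restr E (- {a, b}))\<^sup>*"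
  proof
    assume "(s, v) \<in> (Restr E (- {a, b}))\<^sup>*"
    then have "(s, v) \<in> (Restr E (- {a}))\<^sup>*" by (rule rtrancl_Restr_mono) blast+
    with av \<open>a \<noteq> s\<close> show False by (simp add: dominates_iff)
  qed
  then obtain c e where c: "c \<in> {a, b}" "(c, e) \<in> E"
      and e: "e \<in> - {a, b}" "(e, v) \<in> (Restr E (- {a, b}))\<^sup>*"
    using rtrancl_Restr_entry[OF sv, of "- {a, b}"] \<open>a \<noteq> v\<close> \<open>b \<noteq> v\<close> by auto
  show False
  proof (cases "c = a")
    case True
    have "(a, e) \<in> (Restr E (- {b}))\<^sup>*" using c e True \<open>a \<noteq> b\<close> by (intro r_into_rtrancl) blast
    moreover have "(e, v) \<in> (Restr E (- {b}))\<^sup>*" using e(2) by (rule rtrancl_Restr_mono) blast+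
    ultimately have "(s, v) \<in> (Restr E (- {b}))\<^sup>*" using a_avoid_b by (meson rtrancl_trans)
    with bv \<open>b \<noteq> s\<close> show False by (simp add: dominates_iff)
  next
    case False
    have "(b, e) \<in> (Restr E (- {a}))\<^sup>*" using c e False \<open>a \<noteq> b\<close> by (intro r_into_rtrancl) blast
    moreover have "(e, v) \<in> (Restr E (- {a}))\<^sup>*" using e(2) by (rule rtrancl_Restr_mono) blast+
    ultimately have "(s, v) \<in> (Restr E (- {a}))\<^sup>*" using b_avoid_a by (meson rtrancl_trans)
    with av \<open>a \<noteq> s\<close> show False by (simp add: dominates_iff)
  qed
qed

section \<open>Immediate dominators and depth\<close>

definition strict_dominators :: "('v \<times> 'v) set \<Rightarrow> 'v \<Rightarrow> 'v \<Rightarrow> 'v set" where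
  "strict_dominators E s v = {u. u \<noteq> v \<and> dominates E s u v}"

lemma flow_graph_rtrancl_in_V:
  assumes "flow_graph V E s" "(s, w) \<in> E\<^sup>*"
  shows "w \<in> V"
  using assms(2,1) unfolding flow_graph_def by (induction rule: rtrancl_induct) auto

lemma finite_strict_dominators:
  assumes "flow_graph V E s"
  shows "finite (strict_dominators E s v)"
proof (rule finite_subset)
  show "strict_dominators E s v \<subseteq> V"
    using flow_graph_rtrancl_in_V[OF assms] by (auto simp: strict_dominators_def dominates_iff)
  show "finite V" using assms by (simp add: flow_graph_def)
qed

lemma card_strict_dominators_less:
  assumes G: "flow_graph V E s" and ab: "dominates E s a b" "a \<noteq> b"
  shows "card (strict_dominators E s a) < card (strict_dominators E s b)"
proof -
  have sub: "insert a (strict_dominators E s a) \<subseteq> strict_dominators E s b"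
  proof
    fix t assume "t \<in> insert a (strict_dominators E s a)"
    then have "t = a \<or> dominates E s t a" by (auto simp: strict_dominators_def)
    then have "dominates E s t b" using ab(1) dominates_trans[of E s t a b] by blast
    moreover have "t \<noteq> b"
      using \<open>t = a \<or> dominates E s t a\<close> dominates_antisym[OF ab(1)] ab(2) by blast
    ultimately show "t \<in> strict_dominators E s b" by (simp add: strict_dominators_def)
  qed
  have "a \<notin> strict_dominators E s a" by (simp add: strict_dominators_def)
  then have "Suc (card (strict_dominators E s a)) = card (insert a (strict_dominators E s a))"
    using finite_strict_dominators[OF G] by simp
  also have "\<dots> \<le> card (strict_dominators E s b)"
    using finite_strict_dominators[OF G] sub by (rule card_mono)
  finally show ?thesis by simp
qed

lemma idom_spec:
  assumes G: "flow_graph V E s" and sv: "(s, v) \<in> E\<^sup>*" and "v \<noteq> s"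
  shows "idom E s v \<noteq> v" "dominates E s (idom E s v) v"
    "\<And>u. u \<noteq> v \<Longrightarrow> dominates E s u v \<Longrightarrow> dominates E s u (idom E s v)"
proof -
  let ?S = "strict_dominators E s v" and ?depth = "\<lambda>u. card (strict_dominators E s u)"
  have "s \<in> ?S" using dominates_start[OF sv] \<open>v \<noteq> s\<close> by (simp add: strict_dominators_def)
  then obtain m where m: "m \<in> ?S" "?depth m = Max (?depth ` ?S)"
    using finite_strict_dominators[OF G, of v] Max_in[of "?depth ` ?S"] by fastforce
  \<comment> \<open>Strict dominators form a chain, so one with the most strict dominators is the deepest.\<close>
  have m_greatest: "dominates E s u m" if "u \<in> ?S" for u
  proof (rule ccontr)
    assume "\<not> dominates E s u m"
    moreover have "dominates E s u v" "dominates E s m v" using that m(1) by (simp_all add: strict_dominators_def)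
    ultimately have "dominates E s m u" "m \<noteq> u"
      using dominates_linear[of E s u v m] dominates_refl dominates_imp_rtrancl by blast+
    then have "?depth m < ?depth u" by (rule card_strict_dominators_less[OF G])
    moreover have "?depth u \<le> ?depth m"
      using that m(2) finite_strict_dominators[OF G, of v] by simp
    ultimately show False by simp
  qed
  have "idom E s v = m" unfolding idom_def
  proof (rule the_equality)
    show "m \<noteq> v \<and> dominates E s m v \<and> (\<forall>u. u \<noteq> v \<and> dominates E s u v \<longrightarrow> dominates E s u m)"
      using m(1) m_greatest by (simp add: strict_dominators_def)
    show "w = m" if "w \<noteq> v \<and> dominates E s w v \<and> (\<forall>u. u \<noteq> v \<and> dominates E s u v \<longrightarrow> dominates E s u w)"
      for w
      using that m(1) m_greatest[of w] dominates_antisym[of E s w m] by (simp add: strict_dominators_def)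
  qed
  with m(1) m_greatest show "idom E s v \<noteq> v" "dominates E s (idom E s v) v"
    "\<And>u. u \<noteq> v \<Longrightarrow> dominates E s u v \<Longrightarrow> dominates E s u (idom E s v)"
    by (simp_all add: strict_dominators_def)
qed

lemma strict_dominators_idom:
  assumes G: "flow_graph V E s" and "(s, v) \<in> E\<^sup>*" "v \<noteq> s"
  shows "strict_dominators E s (idom E s v) = strict_dominators E s v - {idom E s v}"
proof -
  note idom = idom_spec[OF assms]
  have "t \<noteq> v" if "dominates E s t (idom E s v)" for t
  proof
    assume "t = v"
    with that have "v = idom E s v" using idom(2) by (simp add: dominates_antisym)
    with idom(1) show False by simp
  qed
  then show ?thesis
    using idom dominates_trans[of E s _ "idom E s v" v] by (auto simp: strict_dominators_def)
qed

lemma card_strict_dominators_eq_0_iff: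
  assumes G: "flow_graph V E s" and "(s, w) \<in> E\<^sup>*"
  shows "card (strict_dominators E s w) = 0 \<longleftrightarrow> w = s"
proof
  assume "card (strict_dominators E s w) = 0"
  then have "s \<notin> strict_dominators E s w" using finite_strict_dominators[OF G] by auto
  then show "w = s" using dominates_start[OF assms(2)] by (auto simp: strict_dominators_def)
next
  assume "w = s"
  moreover have "strict_dominators E s s = {}"
    using dominates_startD[of E s] by (auto simp: strict_dominators_def)
  ultimately show "card (strict_dominators E s w) = 0" by simp
qed

lemma funpow_idom:
  assumes G: "flow_graph V E s" and sw: "(s, w) \<in> E\<^sup>*"
  shows "k \<le> card (strict_dominators E s w) \<Longrightarrow> (s, (idom E s ^^ k) w) \<in> E\<^sup>* \<and>
    card (strict_dominators E s ((idom E s ^^ k) w)) = card (strict_dominators E s w) - k"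
proof (induction k)
  case (Suc k)
  let ?t = "(idom E s ^^ k) w"
  from Suc have t: "(s, ?t) \<in> E\<^sup>*" "card (strict_dominators E s ?t) = card (strict_dominators E s w) - k"
    by simp_all
  with Suc.prems have "?t \<noteq> s" using card_strict_dominators_eq_0_iff[OF G] by fastforce
  note idom = idom_spec[OF G t(1) this]
  have "idom E s ?t \<in> strict_dominators E s ?t" using idom by (simp add: strict_dominators_def)
  then have "card (strict_dominators E s (idom E s ?t)) = card (strict_dominators E s ?t) - 1"
    using strict_dominators_idom[OF G t(1) \<open>?t \<noteq> s\<close>] finite_strict_dominators[OF G] by simp
  with t idom(2) show ?case by (simp add: dominates_iff)
qed (simp add: sw)

lemma dt_depth_eq_card:
  assumes G: "flow_graph V E s" and sw: "(s, w) \<in> E\<^sup>*"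
  shows "dt_depth E s w = card (strict_dominators E s w)"
  unfolding dt_depth_def
proof (rule Least_equality)
  show "(idom E s ^^ card (strict_dominators E s w)) w = s"
    using funpow_idom[OF G sw, of "card (strict_dominators E s w)"]
      card_strict_dominators_eq_0_iff[OF G, of "(idom E s ^^ card (strict_dominators E s w)) w"]
    by simp
  show "card (strict_dominators E s w) \<le> k" if "(idom E s ^^ k) w = s" for k
  proof (rule ccontr)
    assume "\<not> card (strict_dominators E s w) \<le> k"
    then show False
      using that funpow_idom[OF G sw, of k] card_strict_dominators_eq_0_iff[OF G rtrancl_refl] by auto
  qed
qed

lemma dt_depth_less:
  assumes G: "flow_graph V E s" and "dominates E s a b" "a \<noteq> b"
  shows "dt_depth E s a < dt_depth E s b"
  using assms card_strict_dominators_less[OF assms] dt_depth_eq_card[OF G]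
  by (simp add: dominates_iff)

section \<open>Deleting an edge\<close>

lemma flow_graph_Diff: "flow_graph V E s \<Longrightarrow> flow_graph V (E - F) s"
  by (auto simp: flow_graph_def)

lemma affected_walk:
  assumes G: "flow_graph V E s" and sv': "(s, v) \<in> (E - {(x, y)})\<^sup>*" and "v \<noteq> s"
    and u: "u = idom (E - {(x, y)}) s v" and d: "d = idom E s v" and "u \<noteq> d"
  shows "u \<noteq> s" "(s, x) \<in> (Restr E (- {u}))\<^sup>*" "(x, y) \<in> Restr E (- {u})"
    "(y, v) \<in> (Restr (E - {(x, y)}) (- {u, d}))\<^sup>*"
proof -
  let ?E' = "E - {(x, y)}"
  have sv: "(s, v) \<in> E\<^sup>*" using sv' rtrancl_mono[of ?E' E] by blast
  note idom = idom_spec[OF G sv \<open>v \<noteq> s\<close>, folded d]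
  note idom' = idom_spec[OF flow_graph_Diff[OF G] sv' \<open>v \<noteq> s\<close>, folded u]
  have dv': "dominates ?E' s d v" using idom(2) sv' by (rule dominates_subgraph[rotated]) blast
  have du': "dominates ?E' s d u" using idom(1) dv' by (rule idom'(3))
  have u_not_dom_v: "\<not> dominates E s u v"
  proof
    assume "dominates E s u v"
    then have "dominates E s u d" using idom'(1) by (intro idom(3))
    then have "dominates ?E' s u d"
      using dominates_subgraph[of ?E' E s u d] dominates_imp_rtrancl[OF dv'] by blast
    with du' \<open>u \<noteq> d\<close> show False using dominates_antisym[of ?E' s u d] by blast
  qed
  then show "u \<noteq> s" using dominates_start[OF sv] by blast
  have "(s, u) \<in> E\<^sup>*"
    using dominates_imp_rtrancl[OF idom'(2)] rtrancl_mono[of ?E' E] by blast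
  with u_not_dom_v sv \<open>u \<noteq> s\<close> have walk: "(s, v) \<in> (Restr E (- {u}))\<^sup>*"
    by (simp add: dominates_iff)
  have no_walk': "(s, v) \<notin> (Restr ?E' (- {u}))\<^sup>*"
    using idom'(2) \<open>u \<noteq> s\<close> by (simp add: dominates_iff)
  have "Restr ?E' (- {u}) = Restr E (- {u}) - {(x, y)}" by blast
  with rtrancl_Diff_edge[OF walk, of x y] no_walk'
  have "(s, x) \<in> (Restr E (- {u}))\<^sup>*" "(x, y) \<in> Restr E (- {u})"
    and yv: "(y, v) \<in> (Restr ?E' (- {u}))\<^sup>*"
    by auto
  then show "(s, x) \<in> (Restr E (- {u}))\<^sup>*" "(x, y) \<in> Restr E (- {u})" by blast+
  have "(s, d) \<in> (Restr ?E' (- {u}))\<^sup>*"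
    using du' \<open>u \<noteq> d\<close> \<open>u \<noteq> s\<close> dominates_imp_rtrancl[OF du'] dominates_antisym[of ?E' s d u]
    by (auto simp: dominates_iff)
  with no_walk' have no_walk_from_d: "(d, v) \<notin> (Restr ?E' (- {u}))\<^sup>*"
    using rtrancl_trans[of s d "Restr ?E' (- {u})" v] by blast
  have "Restr (Restr ?E' (- {u})) (- {d}) = Restr ?E' (- {u, d})" by blast
  moreover have "(d, v) \<in> (Restr ?E' (- {u}))\<^sup>*"
    if "(d, e) \<in> Restr ?E' (- {u})" "(e, v) \<in> (Restr (Restr ?E' (- {u})) (- {d}))\<^sup>*" for e
    using that rtrancl_mono[of "Restr (Restr ?E' (- {u})) (- {d})" "Restr ?E' (- {u})"]
    by (meson Int_lower1 converse_rtrancl_into_rtrancl subsetD)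
  ultimately show "(y, v) \<in> (Restr ?E' (- {u, d}))\<^sup>*"
    using rtrancl_Restr_entry[OF yv, of "- {d}"] idom(1) no_walk_from_d by auto
qed

lemma affected_dominates_target:
  assumes G: "flow_graph V E s" and sv': "(s, v) \<in> (E - {(x, y)})\<^sup>*" and "v \<noteq> s"
    and sy': "(s, y) \<in> (E - {(x, y)})\<^sup>*"
    and u: "u = idom (E - {(x, y)}) s v" and d: "d = idom E s v" and "u \<noteq> d"
  shows "dominates (E - {(x, y)}) s u y"
proof -
  let ?A = "Restr (E - {(x, y)}) (- {u})"
  note walk = affected_walk[OF G sv' \<open>v \<noteq> s\<close> u d \<open>u \<noteq> d\<close>]
  note idom' = idom_spec[OF flow_graph_Diff[OF G] sv' \<open>v \<noteq> s\<close>, folded u]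
  have "(y, v) \<in> ?A\<^sup>*" using walk(4) by (rule rtrancl_Restr_mono) blast+
  moreover have "(s, v) \<notin> ?A\<^sup>*" using idom'(2) walk(1) by (simp add: dominates_iff)
  ultimately have "(s, y) \<notin> ?A\<^sup>*" using rtrancl_trans[of s y ?A v] by blast
  then show ?thesis using sy' dominates_imp_rtrancl[OF idom'(2)] by (simp add: dominates_iff)
qed

text \<open>The last edge into \<open>y\<close> of a walk from \<open>s\<close> to \<open>x\<close> avoiding \<open>u\<close>, followed by \<open>(x, y)\<close>,
  shows that \<open>d(y)\<close> is reachable in \<open>G'\<close> avoiding \<open>u\<close>.\<close>

lemma idom_target_dominates_new_idom:
  assumes G: "flow_graph V E s" and sv': "(s, v) \<in> (E - {(x, y)})\<^sup>*" and "v \<noteq> s"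
    and sy': "(s, y) \<in> (E - {(x, y)})\<^sup>*"
    and u: "u = idom (E - {(x, y)}) s v" and d: "d = idom E s v" and "u \<noteq> d"
  shows "dominates (E - {(x, y)}) s (idom E s y) u"
proof -
  let ?E' = "E - {(x, y)}" and ?z = "idom E s y"
  let ?Q = "Restr (Restr E (- {u})) (- {y})"
  note walk = affected_walk[OF G sv' \<open>v \<noteq> s\<close> u d \<open>u \<noteq> d\<close>]
  have uy': "dominates ?E' s u y" using affected_dominates_target[OF assms] .
  have sy: "(s, y) \<in> E\<^sup>*" using sy' rtrancl_mono[of ?E' E] by blast
  have "y \<noteq> s" using uy' walk(1) dominates_startD[of ?E' s u] by blast
  note idom_y = idom_spec[OF G sy this]
  obtain c where c: "(s, c) \<in> ?Q\<^sup>*" "(c, y) \<in> E"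
    using rtrancl_Restr_exit[OF walk(2), of "- {y}"] walk(3) \<open>y \<noteq> s\<close> by auto
  have "(s, c) \<in> E\<^sup>*" using c(1) rtrancl_mono[of ?Q E] by blast
  with idom_y(2,1) c(2) have "dominates E s ?z c" by (rule dominates_predecessor)
  then have "(s, ?z) \<in> ?Q\<^sup>*" by (rule dominator_on_walk[OF _ _ c(1)]) blast
  then have "(s, ?z) \<in> (Restr ?E' (- {u}))\<^sup>*"
    using rtrancl_mono[of ?Q "Restr ?E' (- {u})"] by blast
  then have "\<not> dominates ?E' s u ?z" using walk(1) by (simp add: dominates_iff)
  moreover have "dominates ?E' s ?z y" using idom_y(2) sy' by (rule dominates_subgraph[rotated]) blast
  ultimately show ?thesis using dominates_linear[OF _ uy'] by blast
qed

lemma affected_idom_eq: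
  assumes G: "flow_graph V E s" and sv': "(s, v) \<in> (E - {(x, y)})\<^sup>*" and "v \<noteq> s"
    and sy': "(s, y) \<in> (E - {(x, y)})\<^sup>*"
    and u: "u = idom (E - {(x, y)}) s v" and d: "d = idom E s v" and "u \<noteq> d"
  shows "idom E s y = d"
proof -
  let ?E' = "E - {(x, y)}" and ?z = "idom E s y"
  have sv: "(s, v) \<in> E\<^sup>*" and sy: "(s, y) \<in> E\<^sup>*"
    using sv' sy' rtrancl_mono[of ?E' E] by blast+
  note idom = idom_spec[OF G sv \<open>v \<noteq> s\<close>, folded d]
  note idom' = idom_spec[OF flow_graph_Diff[OF G] sv' \<open>v \<noteq> s\<close>, folded u]
  have "y \<noteq> s"
    using affected_dominates_target[OF assms] affected_walk(1)[OF G sv' \<open>v \<noteq> s\<close> u d \<open>u \<noteq> d\<close>]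
      dominates_startD[of ?E' s u] by blast
  note idom_y = idom_spec[OF G sy this]
  have "(y, v) \<in> (Restr E (- {d}))\<^sup>*"
    using affected_walk(4)[OF G sv' \<open>v \<noteq> s\<close> u d \<open>u \<noteq> d\<close>] by (rule rtrancl_Restr_mono) blast+
  note d_y = strictly_dominates_backward[OF idom(2,1) sy this]
  have d_dom_z: "dominates E s d ?z" using d_y(2,1) by (rule idom_y(3))
  have zu': "dominates ?E' s ?z u" using idom_target_dominates_new_idom[OF assms] .
  have "(s, v) \<notin> (Restr E (- {?z}))\<^sup>*" if "?z \<noteq> s"
  proof
    assume "(s, v) \<in> (Restr E (- {?z}))\<^sup>*"
    moreover have "Restr E (- {?z}) - {(x, y)} = Restr ?E' (- {?z})" by blast
    moreover have "dominates ?E' s ?z v" using zu' idom'(2) by (rule dominates_trans)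
    then have "(s, v) \<notin> (Restr ?E' (- {?z}))\<^sup>*" using that by (simp add: dominates_iff)
    ultimately have "(s, x) \<in> (Restr E (- {?z}))\<^sup>*" "(x, y) \<in> Restr E (- {?z})"
      using rtrancl_Diff_edge[of s v "Restr E (- {?z})" x y] by auto
    then have "(s, y) \<in> (Restr E (- {?z}))\<^sup>*" by (rule rtrancl_into_rtrancl)
    with idom_y(2) that show False by (simp add: dominates_iff)
  qed
  then have "dominates E s ?z v"
    using dominates_imp_rtrancl[OF idom_y(2)] sv by (simp add: dominates_iff)
  moreover have "?z \<noteq> v" using zu' idom'(1,2) dominates_antisym[of ?E' s u v] by blast
  ultimately have "dominates E s ?z d" by (intro idom(3))
  then show ?thesis using d_dom_z by (rule dominates_antisym)
qed

theorem lemma4: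
  fixes V :: "'v set" and E :: "('v \<times> 'v) set" and s x y v :: 'v
  assumes G: "flow_graph V E s"
    and xy: "(x, y) \<in> E"
    and x_reach: "reachable E s x"
    and y_reach': "reachable (E - {(x, y)}) s y"
    and v_reach: "reachable E s v"
    and v_reach': "reachable (E - {(x, y)}) s v"
    and v_ne_s: "v \<noteq> s"
    and affected: "idom (E - {(x, y)}) s v \<noteq> idom E s v"
  shows "idom E s v = idom E s y \<and>
    (\<exists>P. is_path E P \<and> hd P = y \<and> last P = v \<and>
       (\<forall>w\<in>set P. dt_depth E s (idom E s v) < dt_depth E s w))"
proof -
  let ?E' = "E - {(x, y)}"
  define u where "u = idom ?E' s v"
  define d where "d = idom E s v"
  have sv': "(s, v) \<in> ?E'\<^sup>*" and sy': "(s, y) \<in> ?E'\<^sup>*" and sv: "(s, v) \<in> E\<^sup>*"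
    using v_reach' y_reach' v_reach by (simp_all add: reachable_iff_rtrancl)
  have "u \<noteq> d" using affected by (simp add: u_def d_def)
  note idom = idom_spec[OF G sv v_ne_s, folded d_def]
  have "(y, v) \<in> (Restr E (- {d}))\<^sup>*"
    using affected_walk(4)[OF G sv' v_ne_s u_def d_def \<open>u \<noteq> d\<close>] by (rule rtrancl_Restr_mono) blast+
  then obtain P where P: "is_path (Restr E (- {d})) P" "hd P = y" "last P = v"
    "\<forall>w\<in>set P. (y, w) \<in> (Restr E (- {d}))\<^sup>* \<and> (w, v) \<in> (Restr E (- {d}))\<^sup>*"
    by (rule rtrancl_imp_is_path)
  have "dt_depth E s d < dt_depth E s w" if "w \<in> set P" for w
  proof -
    have "(s, y) \<in> E\<^sup>*" using sy' rtrancl_mono[of ?E' E] by blast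
    moreover have "(y, w) \<in> E\<^sup>*" using P(4) that rtrancl_mono[of "Restr E (- {d})" E] by blast
    ultimately have "(s, w) \<in> E\<^sup>*" by (rule rtrancl_trans)
    moreover have "(w, v) \<in> (Restr E (- {d}))\<^sup>*" using P(4) that by blast
    ultimately show ?thesis
      using dt_depth_less[OF G strictly_dominates_backward[OF idom(2,1)]] by blast
  qed
  moreover have "is_path E P" using P(1) by (rule is_path_mono) blast
  ultimately show ?thesis
    using P(2,3) affected_idom_eq[OF G sv' v_ne_s sy' u_def d_def \<open>u \<noteq> d\<close>] by (auto simp: d_def)
qed

end
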